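(* Let $H$ be an RB function for $\mathcal X_r$, $\eta\ge\max_{p\in\mathcal Q}H(\mathbf f[p])$, $\epsilon>0$, and let $\mathcal V(\vec a,\vec x,\epsilon)$ be a $1-\epsilon$ confidence region for $\frac1n\sum_{j=1}^n\mathbf f[p_{\vec a_{j-1},\vec x_{j-1}}]$, with associated set $V$. Then for every $(\vec a,\vec x)\in V$, $$-\log_2P(\vec a\mid\vec x)\ge nH(\mathcal V(\vec a,\vec x,\epsilon))-\nu(\vec x)\eta .$$
   Context: Setting. A Bell device consists of $k$ boxes; box $i$ takes inputs in a finite set $\mathcal X_i$ and produces outputs in a finite set $\mathcal A_i$; $\mathcal X=\prod_i\mathcal X_i$, $\mathcal A=\prod_i\mathcal A_i$. A single-round behavior is $p=(p(a\mid x))_{a\in\mathcal A,x\in\mathcal X}$; $\mathcal Q$ is the set of quantum behaviors (those realizable by a $k$-partite quantum state and local measurements on each box). A Bell expression is $f\in\mathbb R^{|\mathcal A|\times|\mathcal X|}$ with $f[p]=\sum_{a,x}f(a,x)p(a\mid x)$; fix $\mathbf f=(f_1,\dots,f_t)$, $\mathbf f[p]=(f_1[p],\dots,f_t[p])$, $\mathbf f[\mathcal Q]=\{\mathbf f[p]:p\in\mathcal Q\}$. $n$-round model. $\vec x\in\mathcal X^n$, $\vec a\in\mathcal A^n$, prefixes $\vec x_j,\vec a_j$ (empty for $j=0$). An $n$-round device behavior is $P(\vec a\mid\vec x)=\prod_{j=1}^n p_{\vec a_{j-1},\vec x_{j-1}}(a_j\mid x_j)$ with every $p_{\vec a_{j-1},\vec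 x_{j-1}}\in\mathcal Q$. Inputs are drawn according to $\Pi(\vec x)=\prod_j\pi(x_j)$ for a probability distribution $\pi$ on $\mathcal X$, and $P(\vec a,\vec x)=P(\vec a\mid\vec x)\Pi(\vec x)$ defines the joint distribution $P_{AX}$. RB function. For a nonempty $\mathcal X_r\subseteq\mathcal X$, $H:\mathbf f[\mathcal Q]\to[0,\log_2|\mathcal A|]$ is RB if (1) $\min_{a\in\mathcal A,x\in\mathcal X_r}(-\log_2p(a\mid x))\ge H(\mathbf f[p])$ for all $p\in\mathcal Q$ and (2) $H(q\mathbf f[p_1]+(1-q)\mathbf f[p_2])\le qH(\mathbf f[p_1])+(1-q)H(\mathbf f[p_2])$ for $q\in[0,1]$, $p_1,p_2\in\mathcal Q$. For a set $\mathcal V\subseteq\mathbb R^t$, $H(\mathcal V)$ denotes a fixed number satisfying $H(\mathcal V)\le\inf\{H(\mathbf y):\mathbf y\in\mathbf f[\mathcal Q]\cap\mathcal V\}$, and $H(\mathcal V)=0$ if $\mathbf f[\mathcal Q]\cap\mathcal V=\emptyset$. $\nu(\vec x)$ is the number of $j$ with $x_j\notin\mathcal X_r$. Confidence region. A $1-\epsilon$ confidence region is an assignment $(\vec a,\vec x)\mapsto\mathcal V(\vec a,\vec x,\epsilon)\subseteq\mathbb R^t$ such that for every $n$-round device behavior, $\Pr_{P_{AX}}\big[\frac1n\sum_{j=1}^n\mathbf f[p_{\vec a_{j-1},\vec x_{j-1}}]\in\mathcal V(\vec a,\vec x,\epsilon)\big]\ge1-\epsilon$. The associated set is $V=\{(\vec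 a,\vec x):\frac1n\sum_{j=1}^n\mathbf f[p_{\vec a_{j-1},\vec x_{j-1}}]\in\mathcal V(\vec a,\vec x,\epsilon)\}$. *)

theory Defs
  imports "HOL-Analysis.Analysis"
begin

text \<open>A single-round behavior p is a function with p a x = p(a|x).
  The t Bell expressions are indexed by a finite type 't; f i a x = f_i(a,x).\<close>

type_synonym ('a, 'x) behavior = "'a \<Rightarrow> 'x \<Rightarrow> real"

definition neglog2 :: "real \<Rightarrow> ereal" where
  "neglog2 u = (if u = 0 then \<infinity> else ereal (- log 2 u))"

definition is_behavior :: "('a::finite, 'x) behavior \<Rightarrow> bool" where
  "is_behavior p \<longleftrightarrow> (\<forall>x. (\<forall>a. 0 \<le> p a x) \<and> (\<Sum>a\<in>UNIV. p a x) = 1)"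

definition fval :: "('t::finite \<Rightarrow> ('a::finite, 'x::finite) behavior) \<Rightarrow> ('a, 'x) behavior \<Rightarrow> real ^ 't" where
  "fval f p = (\<chi> i. \<Sum>a\<in>UNIV. \<Sum>x\<in>UNIV. f i a x * p a x)"

definition behavior_set_convex :: "('a, 'x) behavior set \<Rightarrow> bool" where
  "behavior_set_convex Q \<longleftrightarrow>
     (\<forall>p1\<in>Q. \<forall>p2\<in>Q. \<forall>q::real. 0 \<le> q \<and> q \<le> 1 \<longrightarrow> (\<lambda>a x. q * p1 a x + (1 - q) * p2 a x) \<in> Q)"

definition RB :: "('a::finite, 'x::finite) behavior set \<Rightarrow> ('t::finite \<Rightarrow> ('a, 'x) behavior)
                  \<Rightarrow> 'x set \<Rightarrow> (real ^ 't \<Rightarrow> real) \<Rightarrow> bool" where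
  "RB Q f Xr H \<longleftrightarrow>
     (\<forall>p\<in>Q. 0 \<le> H (fval f p) \<and> H (fval f p) \<le> log 2 (real CARD('a))) \<and>
     (\<forall>p\<in>Q. \<forall>a. \<forall>x\<in>Xr. ereal (H (fval f p)) \<le> neglog2 (p a x)) \<and>
     (\<forall>p1\<in>Q. \<forall>p2\<in>Q. \<forall>q::real. 0 \<le> q \<and> q \<le> 1 \<longrightarrow>
        H (q *\<^sub>R fval f p1 + (1 - q) *\<^sub>R fval f p2) \<le> q * H (fval f p1) + (1 - q) * H (fval f p2))"

text \<open>An n-round device behavior: D as xs = p_{as,xs} for prefixes of length < n.\<close>
definition device :: "('a, 'x) behavior set \<Rightarrow> nat \<Rightarrow> ('a list \<Rightarrow> 'x list \<Rightarrow> ('a, 'x) behavior) \<Rightarrow> bool" where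
  "device Q n D \<longleftrightarrow> (\<forall>as xs. length as = length xs \<and> length xs < n \<longrightarrow> D as xs \<in> Q)"

definition Pn :: "nat \<Rightarrow> ('a list \<Rightarrow> 'x list \<Rightarrow> ('a, 'x) behavior) \<Rightarrow> 'a list \<Rightarrow> 'x list \<Rightarrow> real" where
  "Pn n D as xs = (\<Prod>j<n. D (take j as) (take j xs) (as ! j) (xs ! j))"

definition Pi_in :: "nat \<Rightarrow> ('x \<Rightarrow> real) \<Rightarrow> 'x list \<Rightarrow> real" where
  "Pi_in n \<pi> xs = (\<Prod>j<n. \<pi> (xs ! j))"

definition avgf :: "nat \<Rightarrow> ('t::finite \<Rightarrow> ('a::finite, 'x::finite) behavior)
                    \<Rightarrow> ('a list \<Rightarrow> 'x list \<Rightarrow> ('a, 'x) behavior) \<Rightarrow> 'a list \<Rightarrow> 'x list \<Rightarrow> real ^ 't" where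
  "avgf n f D as xs = (1 / real n) *\<^sub>R (\<Sum>j<n. fval f (D (take j as) (take j xs)))"

definition nu :: "nat \<Rightarrow> 'x set \<Rightarrow> 'x list \<Rightarrow> nat" where
  "nu n Xr xs = card {j. j < n \<and> xs ! j \<notin> Xr}"

definition confidence_region ::
  "('a::finite, 'x::finite) behavior set \<Rightarrow> ('t::finite \<Rightarrow> ('a, 'x) behavior) \<Rightarrow> nat \<Rightarrow> ('x \<Rightarrow> real)
   \<Rightarrow> ('a list \<Rightarrow> 'x list \<Rightarrow> real \<Rightarrow> (real ^ 't) set) \<Rightarrow> real \<Rightarrow> bool" where
  "confidence_region Q f n \<pi> Vr eps \<longleftrightarrow>
     (\<forall>D. device Q n D \<longrightarrow>
        (\<Sum>as\<in>{as. length as = n}. \<Sum>xs\<in>{xs. length xs = n}.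
           (if avgf n f D as xs \<in> Vr as xs eps then Pn n D as xs * Pi_in n \<pi> xs else 0)) \<ge> 1 - eps)"

definition assoc_set ::
  "('t::finite \<Rightarrow> ('a::finite, 'x::finite) behavior) \<Rightarrow> nat \<Rightarrow> ('a list \<Rightarrow> 'x list \<Rightarrow> ('a, 'x) behavior)
   \<Rightarrow> ('a list \<Rightarrow> 'x list \<Rightarrow> real \<Rightarrow> (real ^ 't) set) \<Rightarrow> real \<Rightarrow> ('a list \<times> 'x list) set" where
  "assoc_set f n D Vr eps = {(as, xs). length as = n \<and> length xs = n \<and> avgf n f D as xs \<in> Vr as xs eps}"

end

theory Submission
  imports Defs
begin

text \<open>On a round with input in \<open>X\<^sub>r\<close> the RB property bounds the surprisal of the output by \<open>H\<close>
  of that round's behavior; on the other rounds it is nonnegative, hence at least \<open>H - \<eta>\<close>. Summing over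
  the rounds, the surprisal of the whole transcript is at least the sum of the \<open>H\<close>-values minus
  \<open>\<nu>(x)\<eta>\<close>. By convexity of \<open>Q\<close> and of \<open>H\<close>, the average of the round behaviors' \<open>f\<close>-values is itself
  the \<open>f\<close>-value of a behavior in \<open>Q\<close> whose \<open>H\<close>-value is at most the average of the \<open>H\<close>-values; on the
  associated set this average lies in the confidence region, so \<open>H(\<V>)\<close> bounds it from below.\<close>

lemma fval_convex_comb:
  "fval f (\<lambda>a x. q * p1 a x + (1 - q) * p2 a x) = q *\<^sub>R fval f p1 + (1 - q) *\<^sub>R fval f p2"
proof -
  have "(\<Sum>a\<in>UNIV. \<Sum>x\<in>UNIV. f i a x * (q * p1 a x + (1 - q) * p2 a x))
     = q * (\<Sum>a\<in>UNIV. \<Sum>x\<in>UNIV. f i a x * p1 a x) + (1 - q) * (\<Sum>a\<in>UNIV. \<Sum>x\<in>UNIV. f i a x * p2 a x)"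
    for i by (simp add: sum_distrib_left sum.distrib distrib_left mult.left_commute)
  thus ?thesis unfolding fval_def by (simp add: vec_eq_iff)
qed

lemma RB_average_attained:
  assumes conv: "behavior_set_convex Q" and RB: "RB Q f Xr H"
    and "0 < m" and "\<forall>j<m. g j \<in> Q"
  shows "\<exists>p\<in>Q. fval f p = (1 / real m) *\<^sub>R (\<Sum>j<m. fval f (g j))
           \<and> H (fval f p) \<le> (1 / real m) * (\<Sum>j<m. H (fval f (g j)))"
  using assms(3,4)
proof (induction m)
  case 0 then show ?case by simp
next
  case (Suc m)
  show ?case
  proof (cases "m = 0")
    case True
    then show ?thesis using Suc.prems by (intro bexI[of _ "g 0"]) auto
  next
    case False
    then obtain p where pQ: "p \<in> Q" and fp: "fval f p = (1 / real m) *\<^sub>R (\<Sum>j<m. fval f (g j))"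
      and Hp: "H (fval f p) \<le> (1 / real m) * (\<Sum>j<m. H (fval f (g j)))"
      using Suc by auto
    define q where "q = real m / real (Suc m)"
    have q01: "0 \<le> q" "q \<le> 1" unfolding q_def by auto
    have q_compl: "1 - q = 1 / real (Suc m)" unfolding q_def by (simp add: field_simps)
    have q_div: "q * (1 / real m) = 1 / real (Suc m)" unfolding q_def using False by (simp add: field_simps)
    have gm: "g m \<in> Q" using Suc.prems by auto
    define r where "r = (\<lambda>a x. q * p a x + (1 - q) * g m a x)"
    have rQ: "r \<in> Q" using conv pQ gm q01 unfolding behavior_set_convex_def r_def by blast
    have "fval f r = q *\<^sub>R fval f p + (1 - q) *\<^sub>R fval f (g m)"
      unfolding r_def by (rule fval_convex_comb)
    also have "\<dots> = (1 / real (Suc m)) *\<^sub>R (\<Sum>j<Suc m. fval f (g j))"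
      unfolding fp scaleR_scaleR q_div q_compl by (simp add: scaleR_right_distrib)
    finally have fr: "fval f r = (1 / real (Suc m)) *\<^sub>R (\<Sum>j<Suc m. fval f (g j))" .
    have "H (fval f r) \<le> q * H (fval f p) + (1 - q) * H (fval f (g m))"
      using RB pQ gm q01 unfolding RB_def fval_convex_comb[symmetric] r_def by blast
    also have "\<dots> \<le> q * ((1 / real m) * (\<Sum>j<m. H (fval f (g j)))) + (1 - q) * H (fval f (g m))"
      using mult_left_mono[OF Hp q01(1)] by simp
    also have "\<dots> = (1 / real (Suc m)) * (\<Sum>j<Suc m. H (fval f (g j)))"
      unfolding mult.assoc[symmetric] q_div q_compl by (simp add: distrib_left)
    finally show ?thesis using rQ fr by blast
  qed
qed

lemma HV_le_average_H:
  assumes conv: "behavior_set_convex Q" and RB: "RB Q f Xr H"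
    and HV_le: "\<forall>S. \<forall>y\<in>(fval f ` Q) \<inter> S. HV S \<le> H y"
    and gQ: "\<forall>j<n. g j \<in> Q"
    and avg_in: "(1 / real n) *\<^sub>R (\<Sum>j<n. fval f (g j)) \<in> S"
  shows "real n * HV S \<le> (\<Sum>j<n. H (fval f (g j)))"
proof (cases "n = 0")
  case False
  then obtain p where pQ: "p \<in> Q" and fp: "fval f p = (1 / real n) *\<^sub>R (\<Sum>j<n. fval f (g j))"
    and Hp: "H (fval f p) \<le> (1 / real n) * (\<Sum>j<n. H (fval f (g j)))"
    using RB_average_attained[OF conv RB, of n g] gQ by auto
  have "HV S \<le> H (fval f p)" using HV_le pQ avg_in unfolding fp[symmetric] by blast
  then have "real n * HV S \<le> real n * H (fval f p)" by (simp add: mult_left_mono)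
  also have "\<dots> \<le> (\<Sum>j<n. H (fval f (g j)))" using Hp False by (simp add: field_simps)
  finally show ?thesis .
qed simp

lemma behavior_le_one:
  assumes "is_behavior p" shows "p a x \<le> 1"
proof -
  have "p a x \<le> (\<Sum>a\<in>UNIV. p a x)"
    using assms unfolding is_behavior_def by (intro member_le_sum) auto
  thus ?thesis using assms unfolding is_behavior_def by simp
qed

lemma neglog2_nonneg: "0 \<le> u \<Longrightarrow> u \<le> 1 \<Longrightarrow> 0 \<le> neglog2 u"
  unfolding neglog2_def by simp

lemma neglog2_prod_ge_sum:
  assumes "finite J" and nonneg: "\<And>j. j \<in> J \<Longrightarrow> 0 \<le> u j"
    and bound: "\<And>j. j \<in> J \<Longrightarrow> ereal (c j) \<le> neglog2 (u j)"
  shows "ereal (\<Sum>j\<in>J. c j) \<le> neglog2 (\<Prod>j\<in>J. u j)"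
proof (cases "\<forall>j\<in>J. u j \<noteq> 0")
  case True
  then have pos: "\<And>j. j \<in> J \<Longrightarrow> 0 < u j" using nonneg by (simp add: less_le)
  have "c j \<le> - log 2 (u j)" if "j \<in> J" for j
    using bound[OF that] pos[OF that] unfolding neglog2_def by simp
  then have "(\<Sum>j\<in>J. c j) \<le> (\<Sum>j\<in>J. - log 2 (u j))" by (rule sum_mono)
  also have "\<dots> = - log 2 (\<Prod>j\<in>J. u j)"
    using \<open>finite J\<close> True by (simp add: log_def ln_prod sum_divide_distrib sum_negf)
  finally show ?thesis using pos unfolding neglog2_def by (simp add: prod_pos less_le)
next
  case False
  then show ?thesis using \<open>finite J\<close> unfolding neglog2_def by (auto simp: prod_zero_iff)
qed

lemma RB_round_bound:
  assumes Q_beh: "\<forall>p\<in>Q. is_behavior p" and RB: "RB Q f Xr H"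
    and eta: "\<forall>p\<in>Q. H (fval f p) \<le> \<eta>" and pQ: "p \<in> Q"
  shows "ereal (H (fval f p) - (if x \<in> Xr then 0 else \<eta>)) \<le> neglog2 (p a x)"
proof (cases "x \<in> Xr")
  case True
  then show ?thesis using RB pQ unfolding RB_def by simp
next
  case False
  have beh: "is_behavior p" using Q_beh pQ by blast
  then have "0 \<le> p a x" unfolding is_behavior_def by blast
  then have "0 \<le> neglog2 (p a x)" using neglog2_nonneg behavior_le_one[OF beh] by blast
  moreover have "ereal (H (fval f p) - (if x \<in> Xr then 0 else \<eta>)) \<le> 0"
    using False eta pQ by simp
  ultimately show ?thesis by (rule order_trans[rotated])
qed

lemma sum_outside_eq_nu:
  "(\<Sum>j<n. if xs ! j \<in> Xr then 0 else \<eta>) = real (nu n Xr xs) * \<eta>"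
proof -
  have "(\<Sum>j<n. if xs ! j \<in> Xr then 0 else \<eta>) = (\<Sum>j\<in>{j\<in>{..<n}. xs ! j \<notin> Xr}. \<eta>)"
    by (subst sum.inter_filter) (auto intro: sum.cong)
  also have "{j\<in>{..<n}. xs ! j \<notin> Xr} = {j. j < n \<and> xs ! j \<notin> Xr}" by auto
  finally show ?thesis unfolding nu_def by simp
qed

text \<open>Only membership in the associated set is used: the confidence-region property, \<open>\<pi>\<close>, \<open>\<epsilon>\<close>,
  \<open>X\<^sub>r \<noteq> {}\<close> and the convention for \<open>H\<close> of a region missing \<open>f[Q]\<close> play no role in this bound.\<close>

theorem lemma2:
  fixes Q :: "('a::finite, 'x::finite) behavior set"
    and f :: "'t::finite \<Rightarrow> ('a, 'x) behavior"
    and Xr :: "'x set"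
    and H :: "real ^ 't \<Rightarrow> real"
    and HV :: "(real ^ 't) set \<Rightarrow> real"
    and \<eta> eps :: real
    and n :: nat
    and \<pi> :: "'x \<Rightarrow> real"
    and Vr :: "'a list \<Rightarrow> 'x list \<Rightarrow> real \<Rightarrow> (real ^ 't) set"
    and D :: "'a list \<Rightarrow> 'x list \<Rightarrow> ('a, 'x) behavior"
  assumes Q_beh: "\<forall>p\<in>Q. is_behavior p"
    and Q_convex: "behavior_set_convex Q"
    and Xr_ne: "Xr \<noteq> {}"
    and RB: "RB Q f Xr H"
    and HV_le: "\<forall>S. \<forall>y\<in>(fval f ` Q) \<inter> S. HV S \<le> H y"
    and HV_empty: "\<forall>S. (fval f ` Q) \<inter> S = {} \<longrightarrow> HV S = 0"
    and eta: "\<forall>p\<in>Q. H (fval f p) \<le> \<eta>"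
    and eps: "eps > 0"
    and pi_dist: "(\<forall>x. 0 \<le> \<pi> x) \<and> (\<Sum>x\<in>UNIV. \<pi> x) = 1"
    and conf: "confidence_region Q f n \<pi> Vr eps"
    and dev: "device Q n D"
  shows "\<forall>(as, xs) \<in> assoc_set f n D Vr eps.
           neglog2 (Pn n D as xs) \<ge> ereal (real n * HV (Vr as xs eps) - real (nu n Xr xs) * \<eta>)"
proof clarify
  fix as xs assume "(as, xs) \<in> assoc_set f n D Vr eps"
  then have len: "length as = n" "length xs = n" and avg_in: "avgf n f D as xs \<in> Vr as xs eps"
    unfolding assoc_set_def by auto
  define g where "g j = D (take j as) (take j xs)" for j
  have gQ: "\<forall>j<n. g j \<in> Q" using dev len unfolding device_def g_def by auto
  have "real n * HV (Vr as xs eps) - real (nu n Xr xs) * \<eta>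
        \<le> (\<Sum>j<n. H (fval f (g j)) - (if xs ! j \<in> Xr then 0 else \<eta>))"
    using HV_le_average_H[OF Q_convex RB HV_le gQ, of "Vr as xs eps"] avg_in
    by (simp add: avgf_def g_def sum_subtractf sum_outside_eq_nu)
  also have "ereal \<dots> \<le> neglog2 (\<Prod>j<n. g j (as ! j) (xs ! j))"
    using gQ Q_beh RB_round_bound[OF Q_beh RB eta] unfolding is_behavior_def
    by (intro neglog2_prod_ge_sum) auto
  finally show "ereal (real n * HV (Vr as xs eps) - real (nu n Xr xs) * \<eta>) \<le> neglog2 (Pn n D as xs)"
    unfolding Pn_def g_def by simp
qed

end
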